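(* For every $x\in X(l_1,\dots,l_n,l_\infty)$ and every $g\in J_n$, the border thickness of $gx$ equals the border thickness of $x$.
   Context: Cactus group: $J_n$ is the group generated by $s_{p,q}$, $1\le p<q\le n$, subject to the relations $s_{p,q}^2=e$; $s_{p,q}s_{p',q'}=s_{p',q'}s_{p,q}$ if $[p,q]$ and $[p',q']$ are disjoint; $s_{p,q}s_{p',q'}s_{p,q}=s_{p+q-q',p+q-p'}$ if $p\le p'<q'\le q$. Arc diagrams: fix nonnegative integers $l_1,\dots,l_n,l_\infty$. On the boundary circle of a closed disc place $n+1$ marked positions: position $0$ (occupied by $z_\infty$) and positions $1,\dots,n$ following it clockwise. An arc diagram is a bijective assignment of labels $z_1,\dots,z_n$ to positions $1,\dots,n$ together with a finite collection of simple arcs in the disc, pairwise disjoint except at endpoints, each joining two distinct marked points, such that $z_j$ is an endpoint of exactly $l_j$ arcs ($j\in\{1,\dots,n,\infty\}$; $l_j$ is the valence). Parallel arcs are allowed; diagrams are up to isotopy, equivalently determined by the labelling and the number of arcs between each pair of marked points. $X(l_1,\dots,l_n,l_\infty)$ is the set of such diagrams. Action: $s_{p,q}$ ($1\le p<q\le n$) acts by cutting off positions $p,\dots,q$ with a chord $\ell$ (arcs isotoped to cross $\ell$ at most once), reflecting that region by the reflection reversing $\ell$ (label at position $p+t$ goes to position $q-t$, crossing points on $\ell$ reversed), leaving the rest unchanged and reconnecting arcs at $\ell$. Words act right to left; this is an action of $J_n$. Border thickness: the minimum, over the $n+1$ cyclically adjacent pairs of positions $(0,1),(1,2),\dots,(n-1,n),(n,0)$,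 of the number of arcs joining the two points of the pair. *)

theory Defs
  imports Main
begin

text \<open>Positions on the boundary circle are 0,1,...,n (0 carries z_infinity).
  A diagram is a pair (sigma, A): sigma pos = j means label z_j sits at position pos
  (pos in 1..n), and A i j is the number of arcs joining positions i and j.
  Valences: l j for z_j (j in 1..n), linf for z_infinity.\<close>

type_synonym diagram = "(nat \<Rightarrow> nat) \<times> (nat \<Rightarrow> nat \<Rightarrow> nat)"

definition arc_diagrams :: "nat \<Rightarrow> (nat \<Rightarrow> nat) \<Rightarrow> nat \<Rightarrow> diagram set" where
  "arc_diagrams n l linf = {(\<sigma>, A).
     bij_betw \<sigma> {1..n} {1..n} \<and> (\<forall>i. i \<notin> {1..n} \<longrightarrow> \<sigma> i = i) \<and>
     (\<forall>i j. A i j = A j i) \<and> (\<forall>i. A i i = 0) \<and> (\<forall>i j. n < i \<longrightarrow> A i j = 0) \<and>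
     (\<forall>a b c d. a < b \<and> b < c \<and> c < d \<longrightarrow> A a c = 0 \<or> A b d = 0) \<and>
     (\<forall>i\<in>{1..n}. (\<Sum>j\<le>n. A i j) = l (\<sigma> i)) \<and>
     (\<Sum>j\<le>n. A 0 j) = linf}"

definition inside :: "nat \<Rightarrow> nat \<Rightarrow> nat \<Rightarrow> bool" where
  "inside p q i \<longleftrightarrow> p \<le> i \<and> i \<le> q"

definition refl_pos :: "nat \<Rightarrow> nat \<Rightarrow> nat \<Rightarrow> nat" where
  "refl_pos p q i = p + q - i"

text \<open>Inside endpoints of arcs crossing the chord, in their order along the chord
  (starting from the end of the chord between positions p-1 and p).\<close>
definition inner_seq :: "nat \<Rightarrow> nat \<Rightarrow> nat \<Rightarrow> (nat \<Rightarrow> nat \<Rightarrow> nat) \<Rightarrow> nat list" where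
  "inner_seq n p q A =
     concat (map (\<lambda>i. replicate (\<Sum>k\<in>{0..n} - {p..q}. A i k) i) [p..<Suc q])"

text \<open>Outside endpoints of arcs crossing the chord, in the same order along the chord:
  positions p-1, ..., 0, n, ..., q+1.\<close>
definition outer_seq :: "nat \<Rightarrow> nat \<Rightarrow> nat \<Rightarrow> (nat \<Rightarrow> nat \<Rightarrow> nat) \<Rightarrow> nat list" where
  "outer_seq n p q A =
     concat (map (\<lambda>k. replicate (\<Sum>i\<in>{p..q}. A k i) k) (rev [0..<p] @ rev [Suc q..<Suc n]))"

text \<open>After reflecting the cut-off region, the crossing points on the chord are reversed:
  the j-th crossing point keeps its outside half and receives the reflected inside
  half of the (m+1-j)-th crossing point.\<close>
definition new_cross :: "nat \<Rightarrow> nat \<Rightarrow> nat \<Rightarrow> (nat \<Rightarrow> nat \<Rightarrow> nat) \<Rightarrow> (nat \<times> nat) list" where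
  "new_cross n p q A =
     zip (outer_seq n p q A) (rev (map (refl_pos p q) (inner_seq n p q A)))"

definition cross_count :: "nat \<Rightarrow> nat \<Rightarrow> nat \<Rightarrow> (nat \<Rightarrow> nat \<Rightarrow> nat) \<Rightarrow> nat \<Rightarrow> nat \<Rightarrow> nat" where
  "cross_count n p q A k i = length (filter (\<lambda>pr. pr = (k, i)) (new_cross n p q A))"

definition act_s :: "nat \<Rightarrow> nat \<times> nat \<Rightarrow> diagram \<Rightarrow> diagram" where
  "act_s n pq x = (case pq of (p, q) \<Rightarrow> case x of (\<sigma>, A) \<Rightarrow>
     ((\<lambda>i. if inside p q i then \<sigma> (refl_pos p q i) else \<sigma> i),
      (\<lambda>i j. if inside p q i \<and> inside p q j then A (refl_pos p q i) (refl_pos p q j)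
             else if \<not> inside p q i \<and> \<not> inside p q j then A i j
             else if inside p q i then cross_count n p q A j i
             else cross_count n p q A i j)))"

definition act_word :: "nat \<Rightarrow> (nat \<times> nat) list \<Rightarrow> diagram \<Rightarrow> diagram" where
  "act_word n ws x = foldr (act_s n) ws x"

definition cactus_word :: "nat \<Rightarrow> (nat \<times> nat) list \<Rightarrow> bool" where
  "cactus_word n ws \<longleftrightarrow> (\<forall>(p, q)\<in>set ws. 1 \<le> p \<and> p < q \<and> q \<le> n)"

definition border_thickness :: "nat \<Rightarrow> diagram \<Rightarrow> nat" where
  "border_thickness n x = (case x of (\<sigma>, A) \<Rightarrow> Min ({A i (Suc i) | i. i < n} \<union> {A n 0}))"

end

theory Submission
  imports Defs
begin

text \<open>A generator s_{p,q} changes the arc counts only along its chord: adjacent pairs inside the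
  cut region are reflected adjacent pairs, adjacent pairs outside are untouched, and the two new
  adjacent pairs (p-1, p) and (q, q+1) carry min a b arcs, where a counts the arcs from the outer
  point into the region and b the arcs leaving the region from its far end. Both a and b are at
  least the old border thickness. Conversely, if the old minimum sits at (p-1, p), non-crossing
  forces p-1 to meet the region only at p or p to meet the outside only at p-1, and either way one
  of the new pairs carries at most that many arcs. Since the action preserves symmetry and
  non-crossing of the arc counts, induction over the word finishes.\<close>

section \<open>Crossing chords\<close>

definition crosses :: "nat \<Rightarrow> nat \<Rightarrow> nat \<Rightarrow> nat \<Rightarrow> bool" where
  "crosses u v x y \<longleftrightarrow>
     (min u v < min x y \<and> min x y < max u v \<and> max u v < max x y) \<or>
     (min x y < min u v \<and> min u v < max x y \<and> max x y < max u v)"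

lemma crosses_swap_left: "crosses v u x y = crosses u v x y"
  unfolding crosses_def by (simp add: min.commute max.commute)

lemma crosses_swap_right: "crosses u v y x = crosses u v x y"
  unfolding crosses_def by (simp add: min.commute max.commute)

lemma crosses_commute: "crosses x y u v = crosses u v x y"
  unfolding crosses_def by auto

lemma crosses_antitone_image:
  assumes anti: "\<And>a b. a \<in> S \<Longrightarrow> b \<in> S \<Longrightarrow> f a < f b \<longleftrightarrow> b < a"
    and S: "u \<in> S" "v \<in> S" "x \<in> S" "y \<in> S"
  shows "crosses (f u) (f v) (f x) (f y) \<longleftrightarrow> crosses u v x y"
proof -
  have minmax: "min (f a) (f b) = f (max a b) \<and> max (f a) (f b) = f (min a b)"
    if "a \<in> S" "b \<in> S" for a b
  proof (cases a b rule: linorder_cases)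
    case less
    then show ?thesis using anti[OF that(2,1)] by (simp add: min_def max_def)
  next
    case greater
    then show ?thesis using anti[OF that] by (simp add: min_def max_def)
  qed simp
  let ?E = "{min u v, max u v, min x y, max x y}"
  have "?E \<subseteq> S"
    using S by (simp add: min_def max_def)
  then have E: "f a < f b \<longleftrightarrow> b < a" if "a \<in> ?E" "b \<in> ?E" for a b
    using anti that by blast
  show ?thesis
    unfolding crosses_def
    using minmax[OF S(1,2)] minmax[OF S(3,4)]
    by (simp only: E[of "max u v" "max x y"] E[of "max x y" "min u v"] E[of "min u v" "min x y"]
        E[of "max x y" "max u v"] E[of "max u v" "min x y"] E[of "min x y" "min u v"] insertI1 insertI2)
      blast
qed

definition symmetric_arcs :: "(nat \<Rightarrow> nat \<Rightarrow> nat) \<Rightarrow> bool" where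
  "symmetric_arcs A \<longleftrightarrow> (\<forall>i j. A i j = A j i)"

definition noncrossing :: "(nat \<Rightarrow> nat \<Rightarrow> nat) \<Rightarrow> bool" where
  "noncrossing A \<longleftrightarrow> (\<forall>a b c d. a < b \<and> b < c \<and> c < d \<longrightarrow> A a c = 0 \<or> A b d = 0)"

lemma noncrossingI:
  assumes "\<And>u v x y. crosses u v x y \<Longrightarrow> A u v = 0 \<or> A x y = 0"
  shows "noncrossing A"
  unfolding noncrossing_def
proof (intro allI impI)
  fix a b c d :: nat
  assume "a < b \<and> b < c \<and> c < d"
  then have "crosses a c b d" unfolding crosses_def by simp
  then show "A a c = 0 \<or> A b d = 0" by (rule assms)
qed

lemma noncrossing_crosses:
  assumes "symmetric_arcs A" "noncrossing A" "crosses u v x y"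
  shows "A u v = 0 \<or> A x y = 0"
proof -
  have "A u v = A (min u v) (max u v)" "A x y = A (min x y) (max x y)"
    using assms(1) unfolding symmetric_arcs_def min_def max_def by auto
  with assms(2,3) show ?thesis
    unfolding noncrossing_def crosses_def by metis
qed

section \<open>Crossing points on the chord of a generator\<close>

lemma count_zip_replicate_prefix:
  assumes "x \<notin> set xs" "y \<notin> set ys"
  shows "length (filter (\<lambda>pr. pr = (x, y)) (zip (replicate a x @ xs) (replicate b y @ ys))) = min a b"
  using assms
proof (induction a arbitrary: b)
  case 0
  then show ?case by (auto simp: filter_empty_conv dest: set_zip_leftD)
next
  case (Suc a)
  then show ?case by (cases b) (auto simp: filter_empty_conv dest: set_zip_rightD)
qed

lemma count_zip_replicate_suffix:
  assumes "x \<notin> set xs" "y \<notin> set ys" "length xs + a = length ys + b"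
  shows "length (filter (\<lambda>pr. pr = (x, y)) (zip (xs @ replicate a x) (ys @ replicate b y))) = min a b"
proof -
  have "zip (xs @ replicate a x) (ys @ replicate b y) =
      rev (zip (replicate a x @ rev xs) (replicate b y @ rev ys))"
    using zip_rev[of "xs @ replicate a x" "ys @ replicate b y"] assms(3) by simp
  then show ?thesis
    using count_zip_replicate_prefix[of x "rev xs" y "rev ys" a b] assms(1,2)
    by (simp add: rev_filter[symmetric])
qed

lemma set_concat_replicate: "set (concat (map (\<lambda>k. replicate (c k) k) xs)) = {k \<in> set xs. c k \<noteq> 0}"
  by auto

lemma length_concat_replicate: "length (concat (map (\<lambda>k. replicate (c k) k) xs)) = sum_list (map c xs)"
  by (induction xs) auto

lemma sorted_wrt_concat_replicate:
  assumes "reflp R" "sorted_wrt R xs"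
  shows "sorted_wrt R (concat (map (\<lambda>k. replicate (c k) k) xs))"
  using assms(2)
proof (induction xs)
  case (Cons x xs)
  have "sorted_wrt R (replicate (c x) x)"
    using assms(1) by (simp add: sorted_wrt_iff_nth_less reflpD)
  with Cons show ?case by (auto simp: sorted_wrt_append)
qed simp

definition next_pos :: "nat \<Rightarrow> nat \<Rightarrow> nat" where
  "next_pos n i = (if i < n then Suc i else 0)"

text \<open>The rank of an outside position in the order p-1, ..., 0, n, ..., q+1 along the chord,
  which is the order in which outer_seq lists the crossing points.\<close>
definition outer_rank :: "nat \<Rightarrow> nat \<Rightarrow> nat \<Rightarrow> nat" where
  "outer_rank n p k = (if k < p then p - 1 - k else p + n - k)"

definition act_arcs :: "nat \<Rightarrow> nat \<Rightarrow> nat \<Rightarrow> (nat \<Rightarrow> nat \<Rightarrow> nat) \<Rightarrow> nat \<Rightarrow> nat \<Rightarrow> nat" where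
  "act_arcs n p q A = (\<lambda>i j.
     if inside p q i \<and> inside p q j then A (refl_pos p q i) (refl_pos p q j)
     else if \<not> inside p q i \<and> \<not> inside p q j then A i j
     else if inside p q i then cross_count n p q A j i
     else cross_count n p q A i j)"

lemma snd_act_s: "snd (act_s n (p, q) x) = act_arcs n p q (snd x)"
  by (cases x) (simp add: act_s_def act_arcs_def)

lemma symmetric_act_arcs: "symmetric_arcs A \<Longrightarrow> symmetric_arcs (act_arcs n p q A)"
  unfolding symmetric_arcs_def act_arcs_def by auto

locale chord_cut =
  fixes n p q :: nat
  assumes one_le_p: "1 \<le> p" and p_less_q: "p < q" and q_le_n: "q \<le> n"
begin

abbreviation arcs_into :: "(nat \<Rightarrow> nat \<Rightarrow> nat) \<Rightarrow> nat \<Rightarrow> nat" where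
  "arcs_into A k \<equiv> \<Sum>i\<in>{p..q}. A k i"

abbreviation arcs_out_of :: "(nat \<Rightarrow> nat \<Rightarrow> nat) \<Rightarrow> nat \<Rightarrow> nat" where
  "arcs_out_of A i \<equiv> \<Sum>k\<in>{0..n} - {p..q}. A i k"

abbreviation reflected_inner_seq :: "(nat \<Rightarrow> nat \<Rightarrow> nat) \<Rightarrow> nat list" where
  "reflected_inner_seq A \<equiv> rev (map (refl_pos p q) (inner_seq n p q A))"

lemma set_outer_positions: "set (rev [0..<p] @ rev [Suc q..<Suc n]) = {0..n} - {p..q}"
  using p_less_q q_le_n by auto

lemma set_outer_seq: "set (outer_seq n p q A) = {k \<in> {0..n} - {p..q}. arcs_into A k \<noteq> 0}"
  unfolding outer_seq_def set_concat_replicate set_outer_positions ..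

lemma set_inner_seq: "set (inner_seq n p q A) = {i \<in> {p..q}. arcs_out_of A i \<noteq> 0}"
  unfolding inner_seq_def set_concat_replicate by auto

lemma length_outer_seq: "length (outer_seq n p q A) = (\<Sum>k\<in>{0..n} - {p..q}. arcs_into A k)"
proof -
  have "distinct (rev [0..<p] @ rev [Suc q..<Suc n])" using p_less_q by auto
  then show ?thesis unfolding outer_seq_def length_concat_replicate
    by (simp only: sum_list_distinct_conv_sum_set set_outer_positions)
qed

lemma length_inner_seq: "length (inner_seq n p q A) = (\<Sum>i\<in>{p..q}. arcs_out_of A i)"
  unfolding inner_seq_def length_concat_replicate
  by (simp only: sum_list_distinct_conv_sum_set[OF distinct_upt] set_upt
      atLeastLessThanSuc_atLeastAtMost)

lemma length_outer_seq_eq_inner_seq: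
  assumes "symmetric_arcs A"
  shows "length (outer_seq n p q A) = length (inner_seq n p q A)"
proof -
  have "(\<Sum>k\<in>{0..n} - {p..q}. arcs_into A k) = (\<Sum>i\<in>{p..q}. \<Sum>k\<in>{0..n} - {p..q}. A k i)"
    by (rule sum.swap)
  also have "\<dots> = (\<Sum>i\<in>{p..q}. arcs_out_of A i)"
    using assms by (simp add: symmetric_arcs_def)
  finally show ?thesis by (simp add: length_outer_seq length_inner_seq)
qed

lemma outer_seq_starts:
  "\<exists>xs. outer_seq n p q A = replicate (arcs_into A (p - 1)) (p - 1) @ xs \<and> p - 1 \<notin> set xs"
proof -
  obtain p' where p': "p = Suc p'" using one_le_p by (cases p) auto
  define xs where "xs = concat (map (\<lambda>k. replicate (arcs_into A k) k) (rev [0..<p'] @ rev [Suc q..<Suc n]))"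
  have "outer_seq n p q A = replicate (arcs_into A p') p' @ xs"
    unfolding outer_seq_def xs_def p' by simp
  moreover have "p' \<notin> set xs"
    unfolding xs_def set_concat_replicate using p' p_less_q by auto
  ultimately show ?thesis using p' by auto
qed

lemma outer_seq_ends:
  "\<exists>xs. outer_seq n p q A = xs @ replicate (arcs_into A (next_pos n q)) (next_pos n q) \<and>
     next_pos n q \<notin> set xs"
proof -
  obtain ks where ks: "rev [0..<p] @ rev [Suc q..<Suc n] = ks @ [next_pos n q]" "next_pos n q \<notin> set ks"
  proof (cases "q < n")
    case True
    then have "rev [0..<p] @ rev [Suc q..<Suc n] = (rev [0..<p] @ rev [Suc (Suc q)..<Suc n]) @ [Suc q]"
      by (simp add: upt_conv_Cons)
    then show ?thesis using that True p_less_q by (auto simp: next_pos_def)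
  next
    case False
    then have "rev [0..<p] @ rev [Suc q..<Suc n] = rev [1..<p] @ [0]"
      using one_le_p q_le_n by (simp add: upt_conv_Cons)
    then show ?thesis using that False by (auto simp: next_pos_def)
  qed
  define xs where "xs = concat (map (\<lambda>k. replicate (arcs_into A k) k) ks)"
  have "outer_seq n p q A = xs @ replicate (arcs_into A (next_pos n q)) (next_pos n q)"
    unfolding outer_seq_def xs_def ks(1) by simp
  moreover have "next_pos n q \<notin> set xs"
    unfolding xs_def set_concat_replicate using ks(2) by auto
  ultimately show ?thesis by blast
qed

lemma reflected_inner_seq_starts:
  "\<exists>xs. reflected_inner_seq A = replicate (arcs_out_of A q) p @ xs \<and> p \<notin> set xs"
proof -
  define xs where "xs = rev (map (refl_pos p q) (concat (map (\<lambda>i. replicate (arcs_out_of A i) i) [p..<q])))"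
  have "[p..<Suc q] = [p..<q] @ [q]" using p_less_q by simp
  then have "reflected_inner_seq A = replicate (arcs_out_of A q) p @ xs"
    unfolding inner_seq_def xs_def by (simp add: refl_pos_def)
  moreover have "p \<notin> set xs"
    unfolding xs_def set_rev set_map set_concat_replicate by (auto simp: refl_pos_def)
  ultimately show ?thesis by blast
qed

lemma reflected_inner_seq_ends:
  "\<exists>xs. reflected_inner_seq A = xs @ replicate (arcs_out_of A p) q \<and> q \<notin> set xs"
proof -
  define xs where "xs = rev (map (refl_pos p q) (concat (map (\<lambda>i. replicate (arcs_out_of A i) i) [Suc p..<Suc q])))"
  have "[p..<Suc q] = p # [Suc p..<Suc q]" using p_less_q by (simp add: upt_conv_Cons)
  then have "reflected_inner_seq A = xs @ replicate (arcs_out_of A p) q"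
    unfolding inner_seq_def xs_def by (simp add: refl_pos_def)
  moreover have "q \<notin> set xs"
    unfolding xs_def set_rev set_map set_concat_replicate by (auto simp: refl_pos_def)
  ultimately show ?thesis by blast
qed

lemma act_arcs_before_cut: "act_arcs n p q A (p - 1) p = min (arcs_into A (p - 1)) (arcs_out_of A q)"
proof -
  obtain xs where xs: "outer_seq n p q A = replicate (arcs_into A (p - 1)) (p - 1) @ xs" "p - 1 \<notin> set xs"
    using outer_seq_starts by blast
  obtain ys where ys: "reflected_inner_seq A = replicate (arcs_out_of A q) p @ ys" "p \<notin> set ys"
    using reflected_inner_seq_starts by blast
  have "\<not> inside p q (p - 1)" "inside p q p"
    using one_le_p p_less_q by (auto simp: inside_def)
  then have "act_arcs n p q A (p - 1) p = cross_count n p q A (p - 1) p"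
    by (simp add: act_arcs_def)
  also have "\<dots> = min (arcs_into A (p - 1)) (arcs_out_of A q)"
    unfolding cross_count_def new_cross_def xs(1) ys(1)
    by (rule count_zip_replicate_prefix[OF xs(2) ys(2)])
  finally show ?thesis .
qed

lemma act_arcs_after_cut:
  assumes "symmetric_arcs A"
  shows "act_arcs n p q A q (next_pos n q) = min (arcs_into A (next_pos n q)) (arcs_out_of A p)"
proof -
  obtain xs where xs: "outer_seq n p q A = xs @ replicate (arcs_into A (next_pos n q)) (next_pos n q)"
      "next_pos n q \<notin> set xs"
    using outer_seq_ends by blast
  obtain ys where ys: "reflected_inner_seq A = ys @ replicate (arcs_out_of A p) q" "q \<notin> set ys"
    using reflected_inner_seq_ends by blast
  have "\<not> inside p q (next_pos n q)" "inside p q q"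
    using one_le_p p_less_q by (auto simp: inside_def next_pos_def)
  then have "act_arcs n p q A q (next_pos n q) = cross_count n p q A (next_pos n q) q"
    by (simp add: act_arcs_def)
  also have "\<dots> = min (arcs_into A (next_pos n q)) (arcs_out_of A p)"
  proof -
    have "length xs + arcs_into A (next_pos n q) = length ys + arcs_out_of A p"
      using length_outer_seq_eq_inner_seq[OF assms] arg_cong[OF xs(1), of length]
        arg_cong[OF ys(1), of length] by simp
    then show ?thesis
      unfolding cross_count_def new_cross_def xs(1) ys(1)
      by (rule count_zip_replicate_suffix[OF xs(2) ys(2)])
  qed
  finally show ?thesis .
qed

lemma new_cross_memD:
  assumes "(k, j) \<in> set (new_cross n p q A)"
  shows "\<not> inside p q k" "k \<le> n" "inside p q j"
    and "\<exists>i. inside p q i \<and> A k i \<noteq> 0"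
    and "\<exists>k'. \<not> inside p q k' \<and> A (refl_pos p q j) k' \<noteq> 0"
proof -
  have k: "k \<in> {0..n} - {p..q}" "arcs_into A k \<noteq> 0"
    using set_zip_leftD[OF assms[unfolded new_cross_def]] by (auto simp: set_outer_seq)
  obtain i where i: "i \<in> {p..q}" "arcs_out_of A i \<noteq> 0" "j = refl_pos p q i"
    using set_zip_rightD[OF assms[unfolded new_cross_def]] by (auto simp: set_inner_seq)
  then have "refl_pos p q j = i" by (auto simp: refl_pos_def)
  show "\<not> inside p q k" "k \<le> n" "inside p q j"
    using k(1) i(1,3) by (auto simp: inside_def refl_pos_def)
  show "\<exists>i. inside p q i \<and> A k i \<noteq> 0"
    using k(2) sum.neutral[of "{p..q}" "A k"] by (auto simp: inside_def)
  show "\<exists>k'. \<not> inside p q k' \<and> A (refl_pos p q j) k' \<noteq> 0"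
    using i(2) sum.neutral[of "{0..n} - {p..q}" "A i"] \<open>refl_pos p q j = i\<close>
    by (auto simp: inside_def)
qed

lemma sorted_outer_seq: "sorted_wrt (\<lambda>a b. outer_rank n p a \<le> outer_rank n p b) (outer_seq n p q A)"
proof -
  have "sorted_wrt (\<lambda>a b. outer_rank n p a \<le> outer_rank n p b) (rev [0..<p] @ rev [Suc q..<Suc n])"
    unfolding sorted_wrt_append sorted_wrt_rev
  proof (intro conjI)
    show "sorted_wrt (\<lambda>a b. outer_rank n p b \<le> outer_rank n p a) [0..<p]"
      by (rule sorted_wrt_mono_rel[OF _ sorted_wrt_upt]) (auto simp: outer_rank_def)
    show "sorted_wrt (\<lambda>a b. outer_rank n p b \<le> outer_rank n p a) [Suc q..<Suc n]"
      by (rule sorted_wrt_mono_rel[OF _ sorted_wrt_upt]) (use p_less_q in \<open>auto simp: outer_rank_def\<close>)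
    show "\<forall>a\<in>set (rev [0..<p]). \<forall>b\<in>set (rev [Suc q..<Suc n]). outer_rank n p a \<le> outer_rank n p b"
      using p_less_q by (auto simp: outer_rank_def)
  qed
  then show ?thesis
    unfolding outer_seq_def by (rule sorted_wrt_concat_replicate[rotated]) (simp add: reflp_def)
qed

lemma sorted_reflected_inner_seq: "sorted (reflected_inner_seq A)"
proof -
  have "sorted_wrt (\<lambda>a b. refl_pos p q b \<le> refl_pos p q a) [p..<Suc q]"
    by (rule sorted_wrt_mono_rel[OF _ sorted_wrt_upt]) (auto simp: refl_pos_def)
  then have "sorted_wrt (\<lambda>a b. refl_pos p q b \<le> refl_pos p q a) (inner_seq n p q A)"
    unfolding inner_seq_def by (rule sorted_wrt_concat_replicate[rotated]) (simp add: reflp_def)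
  then show ?thesis by (simp add: sorted_wrt_rev sorted_wrt_map)
qed

lemma inside_refl_pos: "inside p q i \<Longrightarrow> inside p q (refl_pos p q i)"
  unfolding inside_def refl_pos_def by arith

lemma refl_pos_less_iff:
  "inside p q a \<Longrightarrow> inside p q b \<Longrightarrow> refl_pos p q a < refl_pos p q b \<longleftrightarrow> b < a"
  unfolding inside_def refl_pos_def by arith

lemma refl_pos_between:
  assumes "inside p q u" "inside p q v" "min u v < y" "y < max u v"
  shows "min (refl_pos p q u) (refl_pos p q v) < refl_pos p q y \<and>
    refl_pos p q y < max (refl_pos p q u) (refl_pos p q v)"
  using assms unfolding inside_def refl_pos_def min_def max_def by (simp split: if_splits; arith)

lemma crosses_refl_pos:
  assumes "inside p q u" "inside p q v" "inside p q x" "inside p q y" "crosses u v x y"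
  shows "crosses (refl_pos p q u) (refl_pos p q v) (refl_pos p q x) (refl_pos p q y)"
proof -
  have "crosses (refl_pos p q u) (refl_pos p q v) (refl_pos p q x) (refl_pos p q y) \<longleftrightarrow> crosses u v x y"
    by (rule crosses_antitone_image[where S = "Collect (inside p q)"])
      (use assms(1-4) in \<open>simp_all add: refl_pos_less_iff\<close>)
  with assms(5) show ?thesis by blast
qed

lemma crosses_iff_between:
  assumes "inside p q u" "inside p q v" "\<not> inside p q x"
  shows "crosses u v x y \<longleftrightarrow> min u v < y \<and> y < max u v"
  using assms unfolding crosses_def inside_def min_def max_def by (simp split: if_splits; arith)

lemma not_crosses_inside_outside:
  assumes "inside p q u" "inside p q v" "\<not> inside p q x" "\<not> inside p q y"
  shows "\<not> crosses u v x y"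
proof
  assume "crosses u v x y"
  then have "min u v < y" "y < max u v"
    using crosses_iff_between[OF assms(1-3)] by auto
  with assms(1,2,4) show False
    unfolding inside_def by linarith
qed

lemma crosses_refl_pos_inner_end:
  assumes "inside p q u" "inside p q v" "\<not> inside p q x" "\<not> inside p q k" "crosses u v x y"
  shows "crosses (refl_pos p q u) (refl_pos p q v) (refl_pos p q y) k"
proof -
  have "min u v < y \<and> y < max u v"
    using crosses_iff_between[OF assms(1-3)] assms(5) by blast
  then have "min (refl_pos p q u) (refl_pos p q v) < refl_pos p q y \<and>
      refl_pos p q y < max (refl_pos p q u) (refl_pos p q v)"
    using refl_pos_between assms(1,2) by blast
  then have "crosses (refl_pos p q u) (refl_pos p q v) k (refl_pos p q y)"
    using crosses_iff_between[OF inside_refl_pos[OF assms(1)] inside_refl_pos[OF assms(2)] assms(4)]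
    by blast
  then show ?thesis
    using crosses_swap_right by blast
qed

lemma crosses_move_inner_end:
  assumes "\<not> inside p q u" "\<not> inside p q v" "\<not> inside p q x" "inside p q y" "inside p q i"
    and "crosses u v x y"
  shows "crosses u v x i"
  using assms unfolding crosses_def inside_def min_def max_def by (simp split: if_splits; arith)

lemma not_crosses_if_outer_rank_mono:
  assumes "\<not> inside p q k" "\<not> inside p q k'" "k \<le> n" "k' \<le> n" "inside p q j" "inside p q j'"
    and "outer_rank n p k \<le> outer_rank n p k'" "j \<le> j'"
  shows "\<not> crosses k j k' j'"
  using assms one_le_p p_less_q q_le_n unfolding crosses_def inside_def outer_rank_def min_def max_def
  by (simp split: if_splits; arith)

lemma crosses_before_cut:
  "p < i \<Longrightarrow> i \<le> q \<Longrightarrow> \<not> inside p q k \<Longrightarrow> k \<noteq> p - 1 \<Longrightarrow> crosses (p - 1) i p k"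
  using one_le_p unfolding crosses_def inside_def min_def max_def by (simp split: if_splits; arith)

lemma crosses_after_cut:
  "p \<le> i \<Longrightarrow> i < q \<Longrightarrow> \<not> inside p q k \<Longrightarrow> k \<le> n \<Longrightarrow> k \<noteq> next_pos n q \<Longrightarrow>
   crosses (next_pos n q) i q k"
  using one_le_p q_le_n unfolding crosses_def inside_def next_pos_def min_def max_def
  by (simp split: if_splits; arith)

text \<open>Both halves of the crossing points are listed monotonically along the chord, so the
  reconnected arcs are parallel and never cross each other.\<close>
lemma new_cross_not_crosses:
  assumes "(k, j) \<in> set (new_cross n p q A)" "(k', j') \<in> set (new_cross n p q A)"
  shows "\<not> crosses k j k' j'"
proof -
  let ?O = "outer_seq n p q A" and ?N = "reflected_inner_seq A"
  have ordered: "\<not> crosses k j k' j'"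
    if "(k, j) \<in> set (new_cross n p q A)" "(k', j') \<in> set (new_cross n p q A)"
      "outer_rank n p k \<le> outer_rank n p k'" "j \<le> j'" for k j k' j'
    using new_cross_memD[OF that(1)] new_cross_memD[OF that(2)] that(3,4)
    by (intro not_crosses_if_outer_rank_mono) auto
  have mono: "outer_rank n p (?O ! a) \<le> outer_rank n p (?O ! b) \<and> ?N ! a \<le> ?N ! b"
    if "a \<le> b" "b < length ?O" "b < length ?N" for a b
    using that sorted_wrt_nth_less[OF sorted_outer_seq] sorted_nth_mono[OF sorted_reflected_inner_seq]
    by (cases "a = b") auto
  obtain a b where "a < length (new_cross n p q A)" "b < length (new_cross n p q A)"
      "new_cross n p q A ! a = (k, j)" "new_cross n p q A ! b = (k', j')"
    using assms by (auto simp: in_set_conv_nth)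
  then have ab: "?O ! a = k" "?N ! a = j" "?O ! b = k'" "?N ! b = j'"
      "max a b < length ?O" "max a b < length ?N"
    unfolding new_cross_def by auto
  show ?thesis
  proof (cases "a \<le> b")
    case True
    then show ?thesis using mono[of a b] ab ordered[OF assms] by simp
  next
    case False
    then show ?thesis using mono[of b a] ab ordered[OF assms(2,1)] by (simp add: crosses_commute)
  qed
qed

end

section \<open>The action preserves non-crossing\<close>

locale cut_diagram = chord_cut +
  fixes A :: "nat \<Rightarrow> nat \<Rightarrow> nat"
  assumes symmetric: "symmetric_arcs A" and noncrossing: "noncrossing A"
begin

lemma arcs_sym: "A i j = A j i"
  using symmetric by (simp add: symmetric_arcs_def)

lemma arcs_not_crosses: "A u v \<noteq> 0 \<Longrightarrow> A x y \<noteq> 0 \<Longrightarrow> \<not> crosses u v x y"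
  using noncrossing_crosses[OF symmetric noncrossing, of u v x y] by auto

text \<open>An arc across the chord is read with its outside end first.\<close>
definition new_arc :: "nat \<Rightarrow> nat \<Rightarrow> bool" where
  "new_arc u v \<longleftrightarrow>
     (inside p q u \<and> inside p q v \<and> A (refl_pos p q u) (refl_pos p q v) \<noteq> 0) \<or>
     (\<not> inside p q u \<and> \<not> inside p q v \<and> A u v \<noteq> 0) \<or>
     (u, v) \<in> set (new_cross n p q A)"

lemma act_arcs_nonzero_new_arc: "act_arcs n p q A u v \<noteq> 0 \<Longrightarrow> new_arc u v \<or> new_arc v u"
  by (cases "inside p q u"; cases "inside p q v")
    (auto simp: act_arcs_def new_arc_def cross_count_def filter_empty_conv)

lemma reflected_arcs_not_crosses:
  assumes "inside p q u" "inside p q v" "inside p q x" "inside p q y"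
    and "A (refl_pos p q u) (refl_pos p q v) \<noteq> 0" "A (refl_pos p q x) (refl_pos p q y) \<noteq> 0"
  shows "\<not> crosses u v x y"
  using crosses_refl_pos[OF assms(1-4)] arcs_not_crosses[OF assms(5,6)] by blast

lemma reflected_arc_not_crosses_new_cross:
  assumes "inside p q u" "inside p q v" "A (refl_pos p q u) (refl_pos p q v) \<noteq> 0"
    and "(x, y) \<in> set (new_cross n p q A)"
  shows "\<not> crosses u v x y"
proof
  assume "crosses u v x y"
  obtain k where k: "\<not> inside p q k" "A (refl_pos p q y) k \<noteq> 0"
    using new_cross_memD(5)[OF assms(4)] by blast
  have "crosses (refl_pos p q u) (refl_pos p q v) (refl_pos p q y) k"
    using crosses_refl_pos_inner_end[OF assms(1,2) new_cross_memD(1)[OF assms(4)] k(1)]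
      \<open>crosses u v x y\<close> by blast
  with arcs_not_crosses[OF assms(3) k(2)] show False by blast
qed

lemma outer_arc_not_crosses_new_cross:
  assumes "\<not> inside p q u" "\<not> inside p q v" "A u v \<noteq> 0"
    and "(x, y) \<in> set (new_cross n p q A)"
  shows "\<not> crosses u v x y"
proof
  assume "crosses u v x y"
  obtain i where i: "inside p q i" "A x i \<noteq> 0"
    using new_cross_memD(4)[OF assms(4)] by blast
  have "crosses u v x i"
    using crosses_move_inner_end[OF assms(1,2) new_cross_memD(1,3)[OF assms(4)] i(1)]
      \<open>crosses u v x y\<close> by blast
  with arcs_not_crosses[OF assms(3) i(2)] show False by blast
qed

lemma new_arcs_not_crosses:
  assumes "new_arc u v" "new_arc x y"
  shows "\<not> crosses u v x y"
proof -
  consider (reflected) "inside p q u" "inside p q v" "A (refl_pos p q u) (refl_pos p q v) \<noteq> 0"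
    | (outer) "\<not> inside p q u" "\<not> inside p q v" "A u v \<noteq> 0"
    | (crossing) "(u, v) \<in> set (new_cross n p q A)"
    using assms(1) unfolding new_arc_def by blast
  then show ?thesis
  proof cases
    case reflected
    then show ?thesis
      using assms(2) reflected_arcs_not_crosses[OF reflected(1,2)]
        not_crosses_inside_outside[OF reflected(1,2)] reflected_arc_not_crosses_new_cross[OF reflected]
      unfolding new_arc_def by blast
  next
    case outer
    then show ?thesis
      using assms(2) not_crosses_inside_outside[of x y u v] arcs_not_crosses[OF outer(3)]
        outer_arc_not_crosses_new_cross[OF outer]
      unfolding new_arc_def crosses_commute[of x y u v] by blast
  next
    case crossing
    then show ?thesis
      using assms(2) reflected_arc_not_crosses_new_cross[of x y u v]
        outer_arc_not_crosses_new_cross[of x y u v] new_cross_not_crosses[OF crossing]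
      unfolding new_arc_def crosses_commute[of x y u v] by blast
  qed
qed

lemma noncrossing_act_arcs: "noncrossing (act_arcs n p q A)"
proof (rule noncrossingI, rule ccontr)
  fix u v x y
  assume "crosses u v x y" "\<not> (act_arcs n p q A u v = 0 \<or> act_arcs n p q A x y = 0)"
  then have "new_arc u v \<or> new_arc v u" "new_arc x y \<or> new_arc y x"
    using act_arcs_nonzero_new_arc by auto
  then show False
    using \<open>crosses u v x y\<close> new_arcs_not_crosses[of u v x y] new_arcs_not_crosses[of v u x y]
      new_arcs_not_crosses[of u v y x] new_arcs_not_crosses[of v u y x]
    by (auto simp: crosses_swap_left crosses_swap_right)
qed

end

section \<open>The action preserves the border thickness\<close>

definition border_min :: "nat \<Rightarrow> (nat \<Rightarrow> nat \<Rightarrow> nat) \<Rightarrow> nat" where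
  "border_min n A = Min ((\<lambda>i. A i (next_pos n i)) ` {0..n})"

lemma border_thickness_eq_border_min: "border_thickness n x = border_min n (snd x)"
proof -
  obtain \<sigma> A where x: "x = (\<sigma>, A)" by (cases x)
  have "{A i (Suc i) | i. i < n} \<union> {A n 0} = (\<lambda>i. A i (next_pos n i)) ` {0..n}"
    by (auto simp: next_pos_def image_def less_Suc_eq_le intro: exI[of _ n])
  then show ?thesis by (simp add: x border_thickness_def border_min_def)
qed

lemma border_min_le: "i \<le> n \<Longrightarrow> border_min n A \<le> A i (next_pos n i)"
  unfolding border_min_def by (rule Min_le) auto

lemma border_min_attained: "\<exists>i\<le>n. A i (next_pos n i) = border_min n A"
proof -
  have "border_min n A \<in> (\<lambda>i. A i (next_pos n i)) ` {0..n}"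
    unfolding border_min_def by (rule Min_in) auto
  then show ?thesis by auto
qed

context cut_diagram
begin

lemma next_pos_before_cut: "next_pos n (p - 1) = p"
  using one_le_p p_less_q q_le_n by (simp add: next_pos_def)

lemma border_min_le_before_cut: "border_min n A \<le> A (p - 1) p"
  using border_min_le[of "p - 1" n A] p_less_q q_le_n next_pos_before_cut by simp

lemma border_min_le_arcs_out_of_p: "border_min n A \<le> arcs_out_of A p"
proof -
  have "A p (p - 1) \<le> arcs_out_of A p"
    by (rule member_le_sum) (use one_le_p p_less_q q_le_n in auto)
  then show ?thesis
    using border_min_le_before_cut arcs_sym[of p "p - 1"] by simp
qed

lemma border_min_le_arcs_out_of_q: "border_min n A \<le> arcs_out_of A q"
proof -
  have "A q (next_pos n q) \<le> arcs_out_of A q"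
    by (rule member_le_sum) (use one_le_p q_le_n in \<open>auto simp: next_pos_def\<close>)
  then show ?thesis
    using border_min_le[OF q_le_n, of A] by simp
qed

lemma border_min_le_arcs_into_before: "border_min n A \<le> arcs_into A (p - 1)"
proof -
  have "A (p - 1) p \<le> arcs_into A (p - 1)"
    by (rule member_le_sum) (use p_less_q in auto)
  then show ?thesis
    using border_min_le_before_cut by simp
qed

lemma border_min_le_arcs_into_after: "border_min n A \<le> arcs_into A (next_pos n q)"
proof -
  have "A (next_pos n q) q \<le> arcs_into A (next_pos n q)"
    by (rule member_le_sum) (use p_less_q in auto)
  then show ?thesis
    using border_min_le[OF q_le_n, of A] arcs_sym[of q "next_pos n q"] by simp
qed

lemma border_pair_cases:
  assumes "i \<le> n"
  obtains (inner) "p \<le> i" "Suc i \<le> q" "next_pos n i = Suc i"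
    | (outer) "\<not> inside p q i" "\<not> inside p q (next_pos n i)"
    | (before_cut) "i = p - 1"
    | (after_cut) "i = q"
  using one_le_p p_less_q q_le_n assms unfolding next_pos_def inside_def
  by (cases "i < n"; simp; arith)

lemma act_arcs_inner_border:
  assumes "p \<le> i" "Suc i \<le> q"
  shows "act_arcs n p q A i (Suc i) = A (p + q - Suc i) (Suc (p + q - Suc i))"
proof -
  have "inside p q i" "inside p q (Suc i)"
    "refl_pos p q i = Suc (p + q - Suc i)" "refl_pos p q (Suc i) = p + q - Suc i"
    using assms by (auto simp: inside_def refl_pos_def)
  then show ?thesis using arcs_sym by (simp add: act_arcs_def)
qed

lemma border_min_le_act_arcs:
  assumes "i \<le> n"
  shows "border_min n A \<le> act_arcs n p q A i (next_pos n i)"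
  using assms
proof (cases rule: border_pair_cases)
  case inner
  define j where "j = p + q - Suc i"
  have "next_pos n j = Suc j" "j \<le> n"
    using inner q_le_n by (auto simp: j_def next_pos_def)
  then show ?thesis
    using border_min_le[of j n A] act_arcs_inner_border[OF inner(1,2)] inner(3) by (simp add: j_def)
next
  case outer
  then show ?thesis using border_min_le[OF assms] by (simp add: act_arcs_def)
next
  case before_cut
  then show ?thesis
    using act_arcs_before_cut border_min_le_arcs_into_before border_min_le_arcs_out_of_q
      next_pos_before_cut by simp
next
  case after_cut
  then show ?thesis
    using act_arcs_after_cut[OF symmetric] border_min_le_arcs_into_after border_min_le_arcs_out_of_p
    by simp
qed

text \<open>If the minimum sits at the new border pair (p-1, p), then by non-crossing either p-1 meets
  the cut region only at p, or p meets the outside only at p-1.\<close>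
lemma act_border_le_if_min_before_cut:
  assumes "A (p - 1) p \<le> border_min n A"
  shows "\<exists>i\<le>n. act_arcs n p q A i (next_pos n i) \<le> border_min n A"
proof (cases "\<exists>i. p < i \<and> i \<le> q \<and> A (p - 1) i \<noteq> 0")
  case True
  then obtain i where i: "p < i" "i \<le> q" "A (p - 1) i \<noteq> 0" by blast
  have "arcs_out_of A p = (\<Sum>k\<in>{p - 1}. A p k)"
  proof (rule sum.mono_neutral_right)
    show "\<forall>k\<in>{0..n} - {p..q} - {p - 1}. A p k = 0"
    proof
      fix k assume "k \<in> {0..n} - {p..q} - {p - 1}"
      then have "crosses (p - 1) i p k"
        by (intro crosses_before_cut[OF i(1,2)]) (auto simp: inside_def)
      then show "A p k = 0" using arcs_not_crosses[OF i(3)] by blast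
    qed
  qed (use one_le_p p_less_q q_le_n in auto)
  then have "act_arcs n p q A q (next_pos n q) \<le> border_min n A"
    using act_arcs_after_cut[OF symmetric] assms arcs_sym[of p "p - 1"] by simp
  then show ?thesis using q_le_n by blast
next
  case False
  have "arcs_into A (p - 1) = (\<Sum>i\<in>{p}. A (p - 1) i)"
    by (rule sum.mono_neutral_right) (use False p_less_q in auto)
  then have "act_arcs n p q A (p - 1) (next_pos n (p - 1)) \<le> border_min n A"
    using act_arcs_before_cut assms next_pos_before_cut by simp
  then show ?thesis using p_less_q q_le_n by (intro exI[of _ "p - 1"]) auto
qed

lemma act_border_le_if_min_after_cut:
  assumes "A q (next_pos n q) \<le> border_min n A"
  shows "\<exists>i\<le>n. act_arcs n p q A i (next_pos n i) \<le> border_min n A"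
proof (cases "\<exists>i. p \<le> i \<and> i < q \<and> A (next_pos n q) i \<noteq> 0")
  case True
  then obtain i where i: "p \<le> i" "i < q" "A (next_pos n q) i \<noteq> 0" by blast
  have "arcs_out_of A q = (\<Sum>k\<in>{next_pos n q}. A q k)"
  proof (rule sum.mono_neutral_right)
    show "\<forall>k\<in>{0..n} - {p..q} - {next_pos n q}. A q k = 0"
    proof
      fix k assume "k \<in> {0..n} - {p..q} - {next_pos n q}"
      then have "crosses (next_pos n q) i q k"
        by (intro crosses_after_cut[OF i(1,2)]) (auto simp: inside_def)
      then show "A q k = 0" using arcs_not_crosses[OF i(3)] by blast
    qed
  qed (use one_le_p q_le_n in \<open>auto simp: next_pos_def\<close>)
  then have "act_arcs n p q A (p - 1) (next_pos n (p - 1)) \<le> border_min n A"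
    using act_arcs_before_cut assms next_pos_before_cut by simp
  then show ?thesis using p_less_q q_le_n by (intro exI[of _ "p - 1"]) auto
next
  case False
  have "arcs_into A (next_pos n q) = (\<Sum>i\<in>{q}. A (next_pos n q) i)"
    by (rule sum.mono_neutral_right) (use False p_less_q in auto)
  then have "act_arcs n p q A q (next_pos n q) \<le> border_min n A"
    using act_arcs_after_cut[OF symmetric] assms arcs_sym[of q "next_pos n q"] by simp
  then show ?thesis using q_le_n by blast
qed

lemma act_border_le: "\<exists>i\<le>n. act_arcs n p q A i (next_pos n i) \<le> border_min n A"
proof -
  obtain i where i: "i \<le> n" "A i (next_pos n i) = border_min n A"
    using border_min_attained by blast
  from i(1) show ?thesis
  proof (cases rule: border_pair_cases)
    case inner
    define j where "j = p + q - Suc i"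
    have "p \<le> j" "Suc j \<le> q" "p + q - Suc j = i" "next_pos n j = Suc j" "j \<le> n"
      using inner q_le_n by (auto simp: j_def next_pos_def)
    then have "act_arcs n p q A j (next_pos n j) = A i (next_pos n i)"
      using act_arcs_inner_border[of j] inner(3) by simp
    then show ?thesis using i(2) \<open>j \<le> n\<close> by (intro exI[of _ j]) simp
  next
    case outer
    then show ?thesis using i by (intro exI[of _ i]) (simp add: act_arcs_def)
  next
    case before_cut
    then show ?thesis using act_border_le_if_min_before_cut i(2) next_pos_before_cut by simp
  next
    case after_cut
    then show ?thesis using act_border_le_if_min_after_cut i(2) by simp
  qed
qed

lemma border_min_act_arcs: "border_min n (act_arcs n p q A) = border_min n A"
proof (rule antisym)
  obtain i where "i \<le> n" "act_arcs n p q A i (next_pos n i) \<le> border_min n A"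
    using act_border_le by blast
  then show "border_min n (act_arcs n p q A) \<le> border_min n A"
    using border_min_le[of i n "act_arcs n p q A"] by simp
  show "border_min n A \<le> border_min n (act_arcs n p q A)"
    unfolding border_min_def[of n "act_arcs n p q A"]
    by (rule Min.boundedI) (auto intro: border_min_le_act_arcs)
qed

end

lemma act_word_invariants:
  assumes "symmetric_arcs (snd x)" "noncrossing (snd x)" "cactus_word n ws"
  shows "symmetric_arcs (snd (act_word n ws x)) \<and> noncrossing (snd (act_word n ws x)) \<and>
    border_min n (snd (act_word n ws x)) = border_min n (snd x)"
  using assms(3)
proof (induction ws)
  case Nil
  then show ?case using assms(1,2) by (simp add: act_word_def)
next
  case (Cons w ws)
  obtain p q where w: "w = (p, q)" by (cases w)
  let ?A = "snd (act_word n ws x)"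
  have "cactus_word n ws" "1 \<le> p" "p < q" "q \<le> n"
    using Cons.prems w by (auto simp: cactus_word_def)
  with Cons.IH interpret cut_diagram n p q ?A
    by unfold_locales auto
  have "snd (act_word n (w # ws) x) = act_arcs n p q ?A"
    by (simp add: act_word_def w snd_act_s)
  then show ?case
    using Cons.IH \<open>cactus_word n ws\<close> symmetric_act_arcs[OF symmetric] noncrossing_act_arcs
      border_min_act_arcs
    by simp
qed

theorem mainTheorem4:
  fixes n linf :: nat and l :: "nat \<Rightarrow> nat" and x :: diagram and ws :: "(nat \<times> nat) list"
  assumes "x \<in> arc_diagrams n l linf"
    and "cactus_word n ws"
  shows "border_thickness n (act_word n ws x) = border_thickness n x"
proof -
  obtain \<sigma> A where x: "x = (\<sigma>, A)" by (cases x)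
  have "symmetric_arcs A" "noncrossing A"
    using assms(1) unfolding x arc_diagrams_def symmetric_arcs_def noncrossing_def by simp_all
  then show ?thesis
    using act_word_invariants[OF _ _ assms(2), of x] by (simp add: x border_thickness_eq_border_min)
qed

end
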